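(* Let $M$ be a metric structure. If for $1\leq j\leq n$ the definable predicates $\phi_j(x)=\phi_j(x_1,\dots,x_m)$ have the strong Erdős–Hajnal property, and $u:[0,1]^n\to[0,1]$ is continuous, then $u(\phi_1(x),\dots,\phi_n(x))$ also has the strong Erdős–Hajnal property.
   Context: A $[0,1]$-valued definable predicate $\phi(x_1,\dots,x_m)$ on $M$ has the strong Erdős–Hajnal property if for every $\varepsilon>0$ there is $\delta>0$ such that for all finite $A_i\subseteq M^{x_i}$ ($1\le i\le m$) there are $B_i\subseteq A_i$ with $|B_i|\geq\delta|A_i|$ such that $(B_1,\dots,B_m)$ is $(\phi,\varepsilon)$-homogeneous, i.e. $|\phi(a)-\phi(a')|\leq\varepsilon$ for all $a,a'\in B_1\times\dots\times B_m$. *)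

theory Defs
  imports "HOL-Analysis.Analysis"
begin

text \<open>A predicate in the variable tuple (x_1,...,x_m) is modelled as a real-valued
function on tuples a :: 'm \<Rightarrow> 'a, where the index type 'm (finite) enumerates the
variable blocks x_i and S i is the set M^{x_i} over which x_i ranges.\<close>

definition homogeneous :: "(('m \<Rightarrow> 'a) \<Rightarrow> real) \<Rightarrow> real \<Rightarrow> ('m \<Rightarrow> 'a set) \<Rightarrow> bool" where
  "homogeneous \<phi> \<epsilon> B \<longleftrightarrow>
     (\<forall>a a'. (\<forall>i. a i \<in> B i) \<longrightarrow> (\<forall>i. a' i \<in> B i) \<longrightarrow> \<bar>\<phi> a - \<phi> a'\<bar> \<le> \<epsilon>)"

definition strong_EH :: "('m \<Rightarrow> 'a set) \<Rightarrow> (('m \<Rightarrow> 'a) \<Rightarrow> real) \<Rightarrow> bool" where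
  "strong_EH S \<phi> \<longleftrightarrow>
     (\<forall>\<epsilon>>0. \<exists>\<delta>>0. \<forall>A. (\<forall>i. finite (A i) \<and> A i \<subseteq> S i) \<longrightarrow>
        (\<exists>B. (\<forall>i. B i \<subseteq> A i \<and> real (card (B i)) \<ge> \<delta> * real (card (A i)))
             \<and> homogeneous \<phi> \<epsilon> B))"

end

theory Submission
  imports Defs
begin

(* Iterating the property shrinks the boxes successively to a \<delta>1-fraction homogeneous
   for \<phi>1, inside it to a \<delta>2-fraction homogeneous for \<phi>2, and so on; since homogeneity
   passes to sub-boxes, the final boxes, of relative size \<delta>1 \<cdots> \<delta>n, are \<eta>-homogeneous
   for all \<phi>j at once. There the tuple (\<phi>j a)j moves by at most n \<eta>, and uniform
   continuity of u on the compact cube [0,1]^n turns this into a variation of at most \<epsilon>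
   of the composite. *)

definition finite_box :: "('m \<Rightarrow> 'a set) \<Rightarrow> ('m \<Rightarrow> 'a set) \<Rightarrow> bool" where
  "finite_box S A \<longleftrightarrow> (\<forall>i. finite (A i) \<and> A i \<subseteq> S i)"

definition large_subbox :: "real \<Rightarrow> ('m \<Rightarrow> 'a set) \<Rightarrow> ('m \<Rightarrow> 'a set) \<Rightarrow> bool" where
  "large_subbox \<delta> A B \<longleftrightarrow> (\<forall>i. B i \<subseteq> A i \<and> real (card (B i)) \<ge> \<delta> * real (card (A i)))"

definition strong_EH_family :: "('m \<Rightarrow> 'a set) \<Rightarrow> (('m \<Rightarrow> 'a) \<Rightarrow> real) set \<Rightarrow> bool" where
  "strong_EH_family S \<Phi> \<longleftrightarrow>
     (\<forall>\<epsilon>>0. \<exists>\<delta>>0. \<forall>A. finite_box S A \<longrightarrow>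
        (\<exists>B. large_subbox \<delta> A B \<and> (\<forall>\<phi>\<in>\<Phi>. homogeneous \<phi> \<epsilon> B)))"

lemma strong_EH_family_singleton: "strong_EH_family S {\<phi>} \<longleftrightarrow> strong_EH S \<phi>"
  unfolding strong_EH_family_def strong_EH_def finite_box_def large_subbox_def by simp

lemma strong_EH_familyE:
  assumes "strong_EH_family S \<Phi>" and "\<epsilon> > 0"
  obtains \<delta> where "\<delta> > 0"
    and "\<And>A. finite_box S A \<Longrightarrow> \<exists>B. large_subbox \<delta> A B \<and> (\<forall>\<phi>\<in>\<Phi>. homogeneous \<phi> \<epsilon> B)"
  using assms unfolding strong_EH_family_def by blast

lemma large_subbox_refl: "large_subbox 1 A A"
  unfolding large_subbox_def by simp

lemma large_subbox_trans:
  assumes "large_subbox \<delta>\<^sub>1 A B" and "large_subbox \<delta>\<^sub>2 B C" and "\<delta>\<^sub>2 \<ge> 0"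
  shows "large_subbox (\<delta>\<^sub>2 * \<delta>\<^sub>1) A C"
  unfolding large_subbox_def
proof
  fix i
  have "\<delta>\<^sub>2 * \<delta>\<^sub>1 * real (card (A i)) \<le> \<delta>\<^sub>2 * real (card (B i))"
    using assms(1,3) unfolding large_subbox_def by (simp add: mult.assoc mult_left_mono)
  also have "\<dots> \<le> real (card (C i))"
    using assms(2) unfolding large_subbox_def by blast
  finally show "C i \<subseteq> A i \<and> \<delta>\<^sub>2 * \<delta>\<^sub>1 * real (card (A i)) \<le> real (card (C i))"
    using assms(1,2) unfolding large_subbox_def by blast
qed

lemma finite_box_large_subbox:
  assumes "finite_box S A" and "large_subbox \<delta> A B"
  shows "finite_box S B"
  using assms unfolding finite_box_def large_subbox_def by (meson finite_subset subset_trans)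

lemma homogeneous_large_subbox:
  assumes "homogeneous \<phi> \<epsilon> A" and "large_subbox \<delta> A B"
  shows "homogeneous \<phi> \<epsilon> B"
  using assms unfolding homogeneous_def large_subbox_def by blast

lemma strong_EH_family_empty: "strong_EH_family S {}"
  unfolding strong_EH_family_def using large_subbox_refl zero_less_one by blast

lemma strong_EH_family_Un:
  assumes \<Phi>: "strong_EH_family S \<Phi>" and \<Psi>: "strong_EH_family S \<Psi>"
  shows "strong_EH_family S (\<Phi> \<union> \<Psi>)"
  unfolding strong_EH_family_def
proof (intro allI impI)
  fix \<epsilon> :: real assume "\<epsilon> > 0"
  obtain \<delta>\<^sub>1 where "\<delta>\<^sub>1 > 0" and shrink\<^sub>1:
    "\<And>A. finite_box S A \<Longrightarrow> \<exists>B. large_subbox \<delta>\<^sub>1 A B \<and> (\<forall>\<phi>\<in>\<Phi>. homogeneous \<phi> \<epsilon> B)"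
    using strong_EH_familyE[OF \<Phi> \<open>\<epsilon> > 0\<close>] by blast
  obtain \<delta>\<^sub>2 where "\<delta>\<^sub>2 > 0" and shrink\<^sub>2:
    "\<And>A. finite_box S A \<Longrightarrow> \<exists>B. large_subbox \<delta>\<^sub>2 A B \<and> (\<forall>\<psi>\<in>\<Psi>. homogeneous \<psi> \<epsilon> B)"
    using strong_EH_familyE[OF \<Psi> \<open>\<epsilon> > 0\<close>] by blast
  have "\<exists>C. large_subbox (\<delta>\<^sub>2 * \<delta>\<^sub>1) A C \<and> (\<forall>\<phi>\<in>\<Phi> \<union> \<Psi>. homogeneous \<phi> \<epsilon> C)"
    if A: "finite_box S A" for A
  proof -
    obtain B where B: "large_subbox \<delta>\<^sub>1 A B" and hom\<^sub>1: "\<forall>\<phi>\<in>\<Phi>. homogeneous \<phi> \<epsilon> B"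
      using shrink\<^sub>1[OF A] by blast
    obtain C where C: "large_subbox \<delta>\<^sub>2 B C" and hom\<^sub>2: "\<forall>\<psi>\<in>\<Psi>. homogeneous \<psi> \<epsilon> C"
      using shrink\<^sub>2[OF finite_box_large_subbox[OF A B]] by blast
    have "\<forall>\<phi>\<in>\<Phi>. homogeneous \<phi> \<epsilon> C"
      using hom\<^sub>1 homogeneous_large_subbox[OF _ C] by blast
    moreover have "large_subbox (\<delta>\<^sub>2 * \<delta>\<^sub>1) A C"
      using large_subbox_trans[OF B C] \<open>\<delta>\<^sub>2 > 0\<close> by simp
    ultimately show ?thesis
      using hom\<^sub>2 by blast
  qed
  then show "\<exists>\<delta>>0. \<forall>A. finite_box S A \<longrightarrow>
      (\<exists>C. large_subbox \<delta> A C \<and> (\<forall>\<phi>\<in>\<Phi> \<union> \<Psi>. homogeneous \<phi> \<epsilon> C))"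
    using mult_pos_pos[OF \<open>\<delta>\<^sub>2 > 0\<close> \<open>\<delta>\<^sub>1 > 0\<close>] by blast
qed

lemma strong_EH_family_finite:
  assumes "finite \<Phi>" and "\<And>\<phi>. \<phi> \<in> \<Phi> \<Longrightarrow> strong_EH S \<phi>"
  shows "strong_EH_family S \<Phi>"
  using assms
proof (induction \<Phi> rule: finite_induct)
  case empty
  show ?case by (fact strong_EH_family_empty)
next
  case (insert \<phi> \<Phi>)
  then have "strong_EH_family S {\<phi>}" and "strong_EH_family S \<Phi>"
    by (simp_all add: strong_EH_family_singleton)
  then show ?case
    using strong_EH_family_Un[of S "{\<phi>}" \<Phi>] by simp
qed

lemma dist_vec_le_card_mult:
  fixes x y :: "real^'n::finite"
  assumes "\<And>j. \<bar>x $ j - y $ j\<bar> \<le> e"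
  shows "dist x y \<le> real CARD('n) * e"
proof -
  have "dist x y \<le> (\<Sum>j\<in>UNIV. \<bar>(x - y) $ j\<bar>)"
    unfolding dist_norm by (rule norm_le_l1_cart)
  also have "\<dots> \<le> (\<Sum>j\<in>(UNIV::'n set). e)"
    using assms by (intro sum_mono) simp
  finally show ?thesis by simp
qed

lemma strong_EH_uniformly_continuous_comp:
  fixes \<phi> :: "'n::finite \<Rightarrow> ('m \<Rightarrow> 'a) \<Rightarrow> real"
    and u :: "real^'n \<Rightarrow> real"
  assumes family: "strong_EH_family S (range \<phi>)"
    and uc: "uniformly_continuous_on K u"
    and into_K: "\<And>a. (\<forall>i. a i \<in> S i) \<Longrightarrow> (\<chi> j. \<phi> j a) \<in> K"
  shows "strong_EH S (\<lambda>a. u (\<chi> j. \<phi> j a))"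
  unfolding strong_EH_family_singleton[symmetric] strong_EH_family_def
proof (intro allI impI)
  fix \<epsilon> :: real assume "\<epsilon> > 0"
  then obtain \<eta> where "\<eta> > 0"
    and u_close: "\<And>x y. x \<in> K \<Longrightarrow> y \<in> K \<Longrightarrow> dist x y < \<eta> \<Longrightarrow> dist (u x) (u y) < \<epsilon>"
    using uc unfolding uniformly_continuous_on_def by blast
  define e where "e = \<eta> / (2 * real CARD('n))"
  have "e > 0" and "real CARD('n) * e < \<eta>"
    using \<open>\<eta> > 0\<close> by (simp_all add: e_def)
  obtain \<delta> where "\<delta> > 0" and shrink:
    "\<And>A. finite_box S A \<Longrightarrow> \<exists>B. large_subbox \<delta> A B \<and> (\<forall>\<psi>\<in>range \<phi>. homogeneous \<psi> e B)"
    using strong_EH_familyE[OF family \<open>e > 0\<close>] by blast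
  have "\<exists>B. large_subbox \<delta> A B \<and> homogeneous (\<lambda>a. u (\<chi> j. \<phi> j a)) \<epsilon> B"
    if A: "finite_box S A" for A
  proof -
    obtain B where B: "large_subbox \<delta> A B" and "\<forall>\<psi>\<in>range \<phi>. homogeneous \<psi> e B"
      using shrink[OF A] by blast
    then have hom: "homogeneous (\<phi> j) e B" for j
      by simp
    have "\<bar>u (\<chi> j. \<phi> j a) - u (\<chi> j. \<phi> j a')\<bar> \<le> \<epsilon>"
      if a: "\<forall>i. a i \<in> B i" and a': "\<forall>i. a' i \<in> B i" for a a'
    proof -
      have "\<forall>i. a i \<in> S i" "\<forall>i. a' i \<in> S i"
        using a a' A B unfolding finite_box_def large_subbox_def by blast+
      then have K: "(\<chi> j. \<phi> j a) \<in> K" "(\<chi> j. \<phi> j a') \<in> K"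
        by (simp_all add: into_K)
      have "\<bar>\<phi> j a - \<phi> j a'\<bar> \<le> e" for j
        using hom a a' unfolding homogeneous_def by blast
      then have "dist (\<chi> j. \<phi> j a) (\<chi> j. \<phi> j a') \<le> real CARD('n) * e"
        by (intro dist_vec_le_card_mult) simp
      then have "dist (\<chi> j. \<phi> j a) (\<chi> j. \<phi> j a') < \<eta>"
        using \<open>real CARD('n) * e < \<eta>\<close> by linarith
      then show ?thesis
        using u_close[OF K] by (simp add: dist_real_def)
    qed
    then have "homogeneous (\<lambda>a. u (\<chi> j. \<phi> j a)) \<epsilon> B"
      unfolding homogeneous_def by blast
    with B show ?thesis
      by blast
  qed
  then show "\<exists>\<delta>>0. \<forall>A. finite_box S A \<longrightarrow>
      (\<exists>B. large_subbox \<delta> A B \<and> (\<forall>\<psi>\<in>{\<lambda>a. u (\<chi> j. \<phi> j a)}. homogeneous \<psi> \<epsilon> B))"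
    using \<open>\<delta> > 0\<close> by blast
qed

theorem mainTheorem10:
  fixes S :: "'m::finite \<Rightarrow> 'a set"
    and \<phi> :: "'n::finite \<Rightarrow> ('m \<Rightarrow> 'a) \<Rightarrow> real"
    and u :: "real^'n \<Rightarrow> real"
  assumes valued: "\<And>j a. (\<forall>i. a i \<in> S i) \<Longrightarrow> \<phi> j a \<in> {0..1}"
    and sEH: "\<And>j. strong_EH S (\<phi> j)"
    and cont: "continuous_on {x. \<forall>j. x $ j \<in> {0..1}} u"
    and range: "u ` {x. \<forall>j. x $ j \<in> {0..1}} \<subseteq> {0..1}"
  shows "strong_EH S (\<lambda>a. u (\<chi> j. \<phi> j a))"
proof (rule strong_EH_uniformly_continuous_comp)
  show "strong_EH_family S (range \<phi>)"
    using sEH by (intro strong_EH_family_finite) auto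
  have "{x::real^'n. \<forall>j. x $ j \<in> {0..1}} = cbox (vec 0) (vec 1)"
    by (auto simp: mem_box_cart)
  then have "compact {x::real^'n. \<forall>j. x $ j \<in> {0..1}}"
    by simp
  with cont show "uniformly_continuous_on {x. \<forall>j. x $ j \<in> {0..1}} u"
    by (rule compact_uniformly_continuous)
  show "(\<chi> j. \<phi> j a) \<in> {x. \<forall>j. x $ j \<in> {0..1}}" if "\<forall>i. a i \<in> S i" for a
    using valued[OF that] by simp
qed

end
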